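(* In the setting of the free pseudosolution $A+f(A)$ of $(B\le A,f)$ (with $V\oplus\bigwedge^2V/N(V)$ a $2$-nilpotent graded Lie algebra over $\mathbb{F}_q$, $B\subseteq A\subseteq V$ finite-dimensional and $f\colon B\to V$ a partially defined graded derivation), we have \[N(V)\cap\textstyle\bigwedge^2\big(A+f(B)\big)=N(A+f(A))\cap\textstyle\bigwedge^2\big(A+f(B)\big).\] Hence the subalgebra of $V\oplus\bigwedge^2V/N(V)$ generated by $A+f(B)$ is also a graded subalgebra of $\mathfrak g=(A+f(A))\oplus\bigwedge^2(A+f(A))/N(A+f(A))$, and, since $\tilde f(N(A))\subseteq N(A+f(A))$, the linear map $f\colon A\to A+f(A)$ induces a (graded) derivation-type map from the subalgebra generated by $A$ into $\mathfrak g$ extending the one induced by $f|_B$.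
   Context: All vector spaces are over a finite field $\mathbb{F}_q$; $\bigwedge^2 X$ denotes the exterior square. A $2$-nilpotent graded Lie algebra is presented as $V\oplus\bigwedge^2 V/N(V)$ with $N(V)\subseteq\bigwedge^2V$; the bracket of $x,y\in V$ is the class of $x\wedge y$. For a subspace $X\subseteq V$ put $N(X):=N(V)\cap\bigwedge^2X$. For a linear map $g\colon X\to Y$ between subspaces of a common space, $\tilde g\colon\bigwedge^2X\to\bigwedge^2(X+Y)$ is the linear map with $\tilde g(x\wedge y)=g(x)\wedge y+x\wedge g(y)$. A partially defined graded derivation is a linear map $f\colon B\to V$, $B$ a finite-dimensional subspace of $V$, with $\tilde f(N(B))\subseteq N(V)$. Free pseudosolution: given finite-dimensional $B\subseteq A\subseteq V$ and a partially defined graded derivation $f\colon B\to V$, take an abstract vector space $U\supseteq A+f(B)$ with $\dim(U/(A+f(B)))=\dim(A/B)$, extend $f$ to a linear $f\colon A\to U$ sending a basis of $A$ over $B$ onto a basis of $U$ over $A+f(B)$ (so $U=A+f(A)$), and set $N(A+f(A)):=N(A+f(B))+\tilde f(N(A))$, where $N(A+f(B))=N(V)\cap\bigwedge^2(A+f(B))$ and $N(A)=N(V)\cap\bigwedge^2A$. *)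

theory Defs
  imports Main HOL.Modules "HOL-Library.Function_Algebras"
begin

text \<open>Ambient space: functions 'i => 'a over a field 'a (coordinate space K^I).
Every vector space embeds into such a space, so subspaces of it model arbitrary
vector spaces.  The exterior square of a subspace X is modelled faithfully inside
functions on I x I, x wedge y being the antisymmetrised outer product; over a field
the induced map from the abstract exterior square of X is injective.\<close>

definition sc :: "'a::field \<Rightarrow> ('i \<Rightarrow> 'a) \<Rightarrow> ('i \<Rightarrow> 'a)" where
  "sc c x = (\<lambda>i. c * x i)"

abbreviation vspan :: "('i \<Rightarrow> 'a::field) set \<Rightarrow> ('i \<Rightarrow> 'a) set" where
  "vspan \<equiv> module.span sc"

abbreviation vsubspace :: "('i \<Rightarrow> 'a::field) set \<Rightarrow> bool" where
  "vsubspace \<equiv> module.subspace sc"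

definition fin_dim :: "('i \<Rightarrow> 'a::field) set \<Rightarrow> bool" where
  "fin_dim X \<longleftrightarrow> (\<exists>S. finite S \<and> X = vspan S)"

definition ssum :: "('b::plus) set \<Rightarrow> 'b set \<Rightarrow> 'b set" where
  "ssum X Y = {x + y | x y. x \<in> X \<and> y \<in> Y}"

definition wedge :: "('i \<Rightarrow> 'a::field) \<Rightarrow> ('i \<Rightarrow> 'a) \<Rightarrow> ('i \<times> 'i \<Rightarrow> 'a)" where
  "wedge x y = (\<lambda>(i, j). x i * y j - x j * y i)"

definition wedge2 :: "('i \<Rightarrow> 'a::field) set \<Rightarrow> ('i \<times> 'i \<Rightarrow> 'a) set" where
  "wedge2 X = vspan {wedge x y | x y. x \<in> X \<and> y \<in> X}"

definition linear_on :: "('b \<Rightarrow> 'a::field) set \<Rightarrow> (('b \<Rightarrow> 'a) \<Rightarrow> ('c \<Rightarrow> 'a)) \<Rightarrow> bool" where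
  "linear_on X g \<longleftrightarrow> (\<forall>x\<in>X. \<forall>y\<in>X. g (x + y) = g x + g y) \<and> (\<forall>c. \<forall>x\<in>X. g (sc c x) = sc c (g x))"

definition tilde :: "(('i \<Rightarrow> 'a::field) \<Rightarrow> ('i \<Rightarrow> 'a)) \<Rightarrow> ('i \<Rightarrow> 'a) set
                    \<Rightarrow> ('i \<times> 'i \<Rightarrow> 'a) \<Rightarrow> ('i \<times> 'i \<Rightarrow> 'a)" where
  "tilde g X = (THE h. linear_on (wedge2 X) h
       \<and> (\<forall>x\<in>X. \<forall>y\<in>X. h (wedge x y) = wedge (g x) y + wedge x (g y))
       \<and> (\<forall>w. w \<notin> wedge2 X \<longrightarrow> h w = 0))"

text \<open>T (finite) is a basis of X over the subspace Y \<subseteq> X, i.e. its image is a basis of X/Y\<close>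
definition rel_basis :: "('i \<Rightarrow> 'a::field) set \<Rightarrow> ('i \<Rightarrow> 'a) set \<Rightarrow> ('i \<Rightarrow> 'a) set \<Rightarrow> bool" where
  "rel_basis X Y T \<longleftrightarrow> finite T \<and> T \<subseteq> X \<and> vspan (Y \<union> T) = X
     \<and> (\<forall>c. (\<Sum>t\<in>T. sc (c t) t) \<in> Y \<longrightarrow> (\<forall>t\<in>T. c t = 0))"

end

theory Submission
  imports Defs HOL.Vector_Spaces
begin

text \<open>
  Put C = A + f(B). As the images under f of a basis T of A over B form a basis of U over C,
  there is a linear map P on U killing C with P (f t) = t for t \<in> T, so Q = P \<circ> f is the
  identity on A modulo B. Now let w \<in> N(A) with tilde f A w \<in> wedge2 C. Applying P to the
  first tensor factor of tilde f A w annihilates everything except (Q \<otimes> id) w, hence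
  (Q \<otimes> id) w = 0. Splitting every vector x of A as (x - Q x) + Q x and using the
  antisymmetry of w, this forces w \<in> wedge2 B. Then tilde f A w = tilde f B w \<in> N(V) because
  f restricted to B is a derivation, which is the nontrivial inclusion of the identity.
\<close>

interpretation vs: vector_space "sc :: 'a::field \<Rightarrow> ('i \<Rightarrow> 'a) \<Rightarrow> _"
  by standard (auto simp: sc_def fun_eq_iff algebra_simps)

declare plus_fun_apply [simp del] minus_apply [simp del] uminus_apply [simp del] zero_fun_apply [simp del]

lemma sc_apply: "sc c x i = c * x i"
  by (simp add: sc_def)

lemmas fun_algebra_apply = plus_fun_apply minus_apply uminus_apply zero_fun_apply sc_apply

lemma linear_on_add: "linear_on X g \<Longrightarrow> x \<in> X \<Longrightarrow> y \<in> X \<Longrightarrow> g (x + y) = g x + g y"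
  by (simp add: linear_on_def)

lemma linear_on_sc: "linear_on X g \<Longrightarrow> x \<in> X \<Longrightarrow> g (sc c x) = sc c (g x)"
  by (simp add: linear_on_def)

lemma linear_on_0: "linear_on X g \<Longrightarrow> 0 \<in> X \<Longrightarrow> g 0 = 0"
  using linear_on_sc[of X g 0 0] by simp

lemma linear_on_neg: "linear_on X g \<Longrightarrow> x \<in> X \<Longrightarrow> g (- x) = - g x"
  using linear_on_sc[of X g x "-1"] by simp

lemma linear_on_subset: "linear_on X g \<Longrightarrow> Y \<subseteq> X \<Longrightarrow> linear_on Y g"
  unfolding linear_on_def by blast

lemma linear_on_comp:
  "linear_on X g \<Longrightarrow> linear_on Y h \<Longrightarrow> vsubspace X \<Longrightarrow> g ` X \<subseteq> Y \<Longrightarrow> linear_on X (\<lambda>x. h (g x))"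
  unfolding linear_on_def by (auto simp: image_subset_iff vs.subspace_add vs.subspace_scale)

lemma linear_on_sum:
  assumes "vsubspace X" "linear_on X g" "\<And>t. t \<in> T \<Longrightarrow> F t \<in> X"
  shows "g (\<Sum>t\<in>T. F t) = (\<Sum>t\<in>T. g (F t))"
  using assms(3)
proof (induction T rule: infinite_finite_induct)
  case (insert t T)
  then show ?case
    using assms(1,2) by (simp add: linear_on_add vs.subspace_sum)
qed (use assms(1,2) linear_on_0 vs.subspace_0 in auto)

lemma linear_on_sum_list:
  assumes "vsubspace X" "linear_on X g" "set xs \<subseteq> X"
  shows "g (sum_list xs) = sum_list (map g xs)"
  using assms(3)
proof (induction xs)
  case (Cons x xs)
  have "sum_list xs \<in> X"
    using Cons.prems assms(1) by (induction xs) (auto intro: vs.subspace_add vs.subspace_0)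
  then show ?case
    using Cons assms(2) by (simp add: linear_on_add)
qed (use assms linear_on_0 vs.subspace_0 in auto)

lemma subspace_linear_image:
  assumes X: "vsubspace X" and g: "linear_on X g"
  shows "vsubspace (g ` X)"
proof (rule vs.subspaceI)
  show "0 \<in> g ` X"
    using linear_on_0[OF g vs.subspace_0[OF X]] vs.subspace_0[OF X] by force
next
  fix u v
  assume "u \<in> g ` X" "v \<in> g ` X"
  then obtain x y where "x \<in> X" "y \<in> X" "u = g x" "v = g y"
    by blast
  then show "u + v \<in> g ` X"
    using linear_on_add[OF g] vs.subspace_add[OF X] by (metis image_eqI)
next
  fix c u
  assume "u \<in> g ` X"
  then obtain x where "x \<in> X" "u = g x"
    by blast
  then show "sc c u \<in> g ` X"
    using linear_on_sc[OF g] vs.subspace_scale[OF X] by (metis image_eqI)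
qed

lemma subset_ssum_left: "0 \<in> Y \<Longrightarrow> X \<subseteq> ssum X (Y :: 'b::monoid_add set)"
  unfolding ssum_def by (metis (mono_tags, lifting) add_0_right mem_Collect_eq subsetI)

lemma subset_ssum_right: "0 \<in> X \<Longrightarrow> Y \<subseteq> ssum (X :: 'b::monoid_add set) Y"
  unfolding ssum_def by (metis (mono_tags, lifting) add_0_left mem_Collect_eq subsetI)

lemma subspace_ssum_image:
  assumes A: "vsubspace A" and B: "vsubspace B" "B \<subseteq> A" and f: "linear_on A f"
  shows "vsubspace (ssum A (f ` B))" "A \<subseteq> ssum A (f ` B)" "f ` B \<subseteq> ssum A (f ` B)"
proof -
  have fB: "vsubspace (f ` B)"
    using subspace_linear_image[OF B(1) linear_on_subset[OF f B(2)]] .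
  show "vsubspace (ssum A (f ` B))"
    unfolding ssum_def by (rule vs.subspace_sums[OF A fB])
  show "A \<subseteq> ssum A (f ` B)" "f ` B \<subseteq> ssum A (f ` B)"
    using subset_ssum_left[OF vs.subspace_0[OF fB]] subset_ssum_right[OF vs.subspace_0[OF A]] .
qed

lemma inter_ssum_eq_inter:
  assumes N: "vsubspace N" and W: "vsubspace W" and "0 \<in> D"
    and D: "\<And>d. d \<in> D \<Longrightarrow> d \<in> W \<Longrightarrow> d \<in> N"
  shows "ssum (N \<inter> W) D \<inter> W = N \<inter> W"
proof
  show "N \<inter> W \<subseteq> ssum (N \<inter> W) D \<inter> W"
    using subset_ssum_left[OF \<open>0 \<in> D\<close>] by blast
next
  show "ssum (N \<inter> W) D \<inter> W \<subseteq> N \<inter> W"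
  proof
    fix w
    assume "w \<in> ssum (N \<inter> W) D \<inter> W"
    then obtain n d where "w = n + d" "n \<in> N" "n \<in> W" "d \<in> D" "w \<in> W"
      unfolding ssum_def by blast
    moreover have "d \<in> W"
      using vs.subspace_diff[OF W \<open>w \<in> W\<close> \<open>n \<in> W\<close>] \<open>w = n + d\<close> by simp
    ultimately show "w \<in> N \<inter> W"
      using D vs.subspace_add[OF N] by blast
  qed
qed

section \<open>Relative bases\<close>

lemma rel_basis_subspace: "rel_basis X Y S \<Longrightarrow> vsubspace X"
  unfolding rel_basis_def by (metis vs.subspace_span)

lemma rel_basis_subset: "rel_basis X Y S \<Longrightarrow> Y \<subseteq> X"
  unfolding rel_basis_def using vs.span_superset by blast

lemma rel_basis_decomp:
  assumes S: "rel_basis X Y S" and Y: "vsubspace Y" and x: "x \<in> X"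
  obtains y \<mu> where "y \<in> Y" "x = y + (\<Sum>s\<in>S. sc (\<mu> s) s)"
proof -
  have "x \<in> vspan (Y \<union> S)" and S_fin: "finite S"
    using S x unfolding rel_basis_def by blast+
  then obtain y v where y: "y \<in> vspan Y" and v: "v \<in> vspan S" and xyv: "x = y + v"
    unfolding vs.span_Un by blast
  from v obtain \<mu> where "v = (\<Sum>s\<in>S. sc (\<mu> s) s)"
    unfolding vs.span_finite[OF S_fin] by blast
  moreover have "y \<in> Y"
    using y Y by (metis vs.span_eq_iff)
  ultimately show ?thesis
    using that xyv by blast
qed

lemma rel_basis_coeffs_unique:
  assumes S: "rel_basis X Y S" and Y: "vsubspace Y" and y: "y \<in> Y" "y' \<in> Y"
    and eq: "y + (\<Sum>s\<in>S. sc (\<mu> s) s) = y' + (\<Sum>s\<in>S. sc (\<mu>' s) s)" and s: "s \<in> S"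
  shows "\<mu> s = \<mu>' s"
proof -
  have "(\<Sum>s\<in>S. sc (\<mu> s - \<mu>' s) s) = y' - y"
    using eq by (simp add: sum_subtractf algebra_simps)
  then have "(\<Sum>s\<in>S. sc (\<mu> s - \<mu>' s) s) \<in> Y"
    using y by (simp add: vs.subspace_diff[OF Y])
  then show ?thesis
    using S s unfolding rel_basis_def by fastforce
qed

lemma rel_basis_linear_extension:
  fixes \<phi> :: "('i \<Rightarrow> 'a::field) \<Rightarrow> 'j \<Rightarrow> 'a"
  assumes S: "rel_basis X Y S" and Y: "vsubspace Y"
  shows "\<exists>P. linear_on X P \<and> (\<forall>y\<in>Y. P y = 0) \<and> (\<forall>s\<in>S. P s = \<phi> s)"
proof -
  define coeffs where "coeffs x = (SOME \<mu>. \<exists>y\<in>Y. x = y + (\<Sum>s\<in>S. sc (\<mu> s) s))" for x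
  define P where "P x = (\<Sum>s\<in>S. sc (coeffs x s) (\<phi> s))" for x
  have P_eq: "P x = (\<Sum>s\<in>S. sc (\<mu> s) (\<phi> s))"
    if "y \<in> Y" "x = y + (\<Sum>s\<in>S. sc (\<mu> s) s)" for x y \<mu>
  proof -
    have "\<exists>\<mu>. \<exists>y\<in>Y. x = y + (\<Sum>s\<in>S. sc (\<mu> s) s)"
      using that by blast
    then have "\<exists>y\<in>Y. x = y + (\<Sum>s\<in>S. sc (coeffs x s) s)"
      unfolding coeffs_def by (rule someI_ex)
    then obtain y' where "y' \<in> Y" "x = y' + (\<Sum>s\<in>S. sc (coeffs x s) s)"
      by blast
    then have "coeffs x s = \<mu> s" if "s \<in> S" for s
      using rel_basis_coeffs_unique[OF S Y _ \<open>y \<in> Y\<close> _ that] \<open>x = y + _\<close> by simp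
    then show ?thesis
      unfolding P_def by (intro sum.cong) simp_all
  qed
  have "linear_on X P"
    unfolding linear_on_def
  proof (intro conjI ballI allI)
    fix x x'
    assume "x \<in> X" "x' \<in> X"
    obtain y \<mu> where x: "y \<in> Y" "x = y + (\<Sum>s\<in>S. sc (\<mu> s) s)"
      by (rule rel_basis_decomp[OF S Y \<open>x \<in> X\<close>])
    obtain y' \<mu>' where x': "y' \<in> Y" "x' = y' + (\<Sum>s\<in>S. sc (\<mu>' s) s)"
      by (rule rel_basis_decomp[OF S Y \<open>x' \<in> X\<close>])
    have "x + x' = (y + y') + (\<Sum>s\<in>S. sc (\<mu> s + \<mu>' s) s)"
      using x x' by (simp add: vs.scale_left_distrib sum.distrib algebra_simps)
    from P_eq[OF vs.subspace_add[OF Y x(1) x'(1)] this] show "P (x + x') = P x + P x'"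
      using P_eq[OF x] P_eq[OF x'] by (simp add: vs.scale_left_distrib sum.distrib)
  next
    fix c x
    assume "x \<in> X"
    obtain y \<mu> where x: "y \<in> Y" "x = y + (\<Sum>s\<in>S. sc (\<mu> s) s)"
      by (rule rel_basis_decomp[OF S Y \<open>x \<in> X\<close>])
    have "sc c x = sc c y + (\<Sum>s\<in>S. sc (c * \<mu> s) s)"
      using x by (simp add: vs.scale_right_distrib vs.scale_sum_right)
    from P_eq[OF vs.subspace_scale[OF Y x(1)] this] show "P (sc c x) = sc c (P x)"
      using P_eq[OF x] by (simp add: vs.scale_sum_right)
  qed
  moreover have "P y = 0" if "y \<in> Y" for y
    using P_eq[OF that, of y "\<lambda>_. 0"] by simp
  moreover have "P s = \<phi> s" if "s \<in> S" for s
  proof -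
    have delta: "(\<Sum>s'\<in>S. sc (if s' = s then 1 else 0) (v s')) = v s" for v :: "('i \<Rightarrow> 'a) \<Rightarrow> 'k \<Rightarrow> 'a"
    proof -
      have "(\<Sum>s'\<in>S. sc (if s' = s then 1 else 0) (v s')) = (\<Sum>s'\<in>S. if s = s' then v s' else 0)"
        by (intro sum.cong) auto
      also have "\<dots> = v s"
        using S that by (simp add: rel_basis_def)
      finally show ?thesis .
    qed
    show ?thesis
      using P_eq[OF vs.subspace_0[OF Y], of s "\<lambda>s'. if s' = s then 1 else 0"] delta[of id] delta[of \<phi>]
      by simp
  qed
  ultimately show ?thesis
    by blast
qed

lemma projection_inverting_derivation:
  assumes B: "vsubspace B" and C: "vsubspace C" and f: "linear_on A f" and fBC: "f ` B \<subseteq> C"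
    and T: "rel_basis A B T" "inj_on f T" "rel_basis U C (f ` T)"
  shows "\<exists>P. linear_on U P \<and> (\<forall>c\<in>C. P c = 0) \<and> (\<forall>x\<in>A. f x \<in> U \<and> x - P (f x) \<in> B)"
proof -
  have A: "vsubspace A" and U: "vsubspace U" and "B \<subseteq> A" "C \<subseteq> U"
    using T by (auto simp: rel_basis_subspace rel_basis_subset)
  have "T \<subseteq> A" "f ` T \<subseteq> U"
    using T by (auto simp: rel_basis_def)
  obtain P where P: "linear_on U P" "\<forall>c\<in>C. P c = 0" "\<forall>s\<in>f ` T. P s = inv_into T f s"
    using rel_basis_linear_extension[OF T(3) C] by blast
  have "f x \<in> U \<and> x - P (f x) \<in> B" if x: "x \<in> A" for x
  proof -
    obtain b \<mu> where b: "b \<in> B" and x_eq: "x = b + (\<Sum>t\<in>T. sc (\<mu> t) t)"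
      by (rule rel_basis_decomp[OF T(1) B x])
    have sum_A: "(\<Sum>t\<in>T. sc (\<mu> t) t) \<in> A" and "b \<in> A"
      using b \<open>B \<subseteq> A\<close> \<open>T \<subseteq> A\<close> by (auto intro!: vs.subspace_sum[OF A] vs.subspace_scale[OF A])
    have "f (\<Sum>t\<in>T. sc (\<mu> t) t) = (\<Sum>t\<in>T. f (sc (\<mu> t) t))"
      using \<open>T \<subseteq> A\<close> by (intro linear_on_sum[OF A f]) (auto intro: vs.subspace_scale[OF A])
    then have fx: "f x = f b + (\<Sum>t\<in>T. sc (\<mu> t) (f t))"
      using \<open>b \<in> A\<close> sum_A \<open>T \<subseteq> A\<close>
      by (auto simp: x_eq linear_on_add[OF f] linear_on_sc[OF f] intro!: sum.cong)
    have sum_U: "(\<Sum>t\<in>T. sc (\<mu> t) (f t)) \<in> U" and "f b \<in> U" "P (f b) = 0"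
      using b fBC \<open>C \<subseteq> U\<close> \<open>f ` T \<subseteq> U\<close> P(2)
      by (auto intro!: vs.subspace_sum[OF U] vs.subspace_scale[OF U])
    have "P (\<Sum>t\<in>T. sc (\<mu> t) (f t)) = (\<Sum>t\<in>T. P (sc (\<mu> t) (f t)))"
      using \<open>f ` T \<subseteq> U\<close> by (intro linear_on_sum[OF U P(1)]) (auto intro: vs.subspace_scale[OF U])
    also have "\<dots> = (\<Sum>t\<in>T. sc (\<mu> t) t)"
      using \<open>f ` T \<subseteq> U\<close> P(3) T(2) by (intro sum.cong) (auto simp: linear_on_sc[OF P(1)])
    finally have "f x \<in> U" "P (f x) = (\<Sum>t\<in>T. sc (\<mu> t) t)"
      using fx sum_U \<open>f b \<in> U\<close> \<open>P (f b) = 0\<close> by (simp_all add: vs.subspace_add[OF U] linear_on_add[OF P(1)])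
    then show ?thesis
      using x_eq b by simp
  qed
  then show ?thesis
    using P by blast
qed

section \<open>Tensors given by lists of pairs\<close>

definition outer :: "('i \<Rightarrow> 'a::field) \<Rightarrow> ('i \<Rightarrow> 'a) \<Rightarrow> 'i \<times> 'i \<Rightarrow> 'a" where
  "outer x y = (\<lambda>(i, j). x i * y j)"

definition tensor :: "(('i \<Rightarrow> 'a::field) \<times> ('i \<Rightarrow> 'a)) list \<Rightarrow> 'i \<times> 'i \<Rightarrow> 'a" where
  "tensor L = (\<Sum>(x, y)\<leftarrow>L. outer x y)"

lemma tensor_Nil [simp]: "tensor [] = 0"
  and tensor_Cons [simp]: "tensor ((x, y) # L) = outer x y + tensor L"
  and tensor_append [simp]: "tensor (L @ M) = tensor L + tensor M"
  by (simp_all add: tensor_def)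

lemma tensor_apply: "tensor L (i, j) = (\<Sum>(x, y)\<leftarrow>L. x i * y j)"
  by (induction L) (auto simp: outer_def fun_algebra_apply)

lemma tensor_apply_column: "tensor L (i, j) = (\<Sum>(x, y)\<leftarrow>L. sc (y j) x) i"
  by (induction L) (auto simp: outer_def mult.commute fun_algebra_apply)

lemma tensor_map_swap: "tensor (map prod.swap L) (i, j) = tensor L (j, i)"
  by (induction L) (auto simp: outer_def mult.commute fun_algebra_apply)

lemma tensor_map_apfst_uminus: "tensor (map (apfst uminus) L) = - tensor L"
  by (induction L) (auto simp: outer_def fun_eq_iff fun_algebra_apply)

lemma tensor_eq_0_if_fst_eq_0: "\<forall>p\<in>set L. fst p = 0 \<Longrightarrow> tensor L = 0"
  by (induction L) (auto simp: outer_def zero_fun_def)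

lemma tensor_map_prod_add_left:
  "tensor (map (map_prod (\<lambda>x. g x + h x) k) L) = tensor (map (map_prod g k) L) + tensor (map (map_prod h k) L)"
  by (induction L) (auto simp: outer_def fun_eq_iff fun_algebra_apply algebra_simps)

lemma tensor_map_prod_add_right:
  "tensor (map (map_prod k (\<lambda>x. g x + h x)) L) = tensor (map (map_prod k g) L) + tensor (map (map_prod k h) L)"
  by (induction L) (auto simp: outer_def fun_eq_iff fun_algebra_apply algebra_simps)

lemma tensor_map_apfst_eq_0:
  assumes X: "vsubspace X" and g: "linear_on X g" and L: "fst ` set L \<subseteq> X"
    and L0: "tensor L = 0"
  shows "tensor (map (apfst g) L) = 0"
proof -
  \<comment> \<open>Column j of a tensor is a vector, in X for L; g maps it to column j of the result.\<close>
  have column_0: "(\<Sum>(x, y)\<leftarrow>L. sc (y j) x) = 0" for j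
    using L0 by (auto simp: fun_eq_iff tensor_apply_column[symmetric] fun_algebra_apply)
  have "(\<Sum>(x, y)\<leftarrow>map (apfst g) L. sc (y j) x) = g (\<Sum>(x, y)\<leftarrow>L. sc (y j) x)" for j
  proof -
    have "set (map (\<lambda>(x, y). sc (y j) x) L) \<subseteq> X"
      using L by (auto simp: image_subset_iff intro!: vs.subspace_scale[OF X])
    then have "g (\<Sum>(x, y)\<leftarrow>L. sc (y j) x) = (\<Sum>(x, y)\<leftarrow>L. g (sc (y j) x))"
      by (simp add: linear_on_sum_list[OF X g] o_def prod.case_distrib)
    also have "\<dots> = (\<Sum>(x, y)\<leftarrow>L. sc (y j) (g x))"
      using L by (intro arg_cong[where f = sum_list] map_cong) (auto simp: linear_on_sc[OF g])
    finally show ?thesis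
      by (simp add: o_def split_def)
  qed
  then show ?thesis
    using column_0 linear_on_0[OF g vs.subspace_0[OF X]]
    by (auto simp: fun_eq_iff tensor_apply_column fun_algebra_apply)
qed

lemma tensor_map_apsnd_eq_0:
  assumes "vsubspace X" "linear_on X g" "snd ` set L \<subseteq> X" "tensor L = 0"
  shows "tensor (map (apsnd g) L) = 0"
proof -
  have "tensor (map prod.swap L) = 0"
    using assms(4) by (auto simp: fun_eq_iff tensor_map_swap fun_algebra_apply)
  then have "tensor (map (apfst g) (map prod.swap L)) = 0"
    using assms(3) by (intro tensor_map_apfst_eq_0[OF assms(1,2)]) force
  moreover have "map (apsnd g) L = map prod.swap (map (apfst g) (map prod.swap L))"
    by (induction L) auto
  ultimately show ?thesis
    by (metis (no_types) fun_eq_iff split_pairs tensor_map_swap zero_fun_apply)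
qed

lemma wedge_eq_outer: "wedge x y = outer x y + outer (- y) x"
  by (auto simp: fun_eq_iff wedge_def outer_def fun_algebra_apply)

lemma wedge_sc_left: "wedge (sc c x) y = sc c (wedge x y)"
  by (auto simp: fun_eq_iff wedge_def sc_apply algebra_simps)

lemma wedge_mem_wedge2: "x \<in> X \<Longrightarrow> y \<in> X \<Longrightarrow> wedge x y \<in> wedge2 X"
  unfolding wedge2_def by (rule vs.span_base) blast

lemma subspace_wedge2: "vsubspace (wedge2 X)"
  unfolding wedge2_def by (rule vs.subspace_span)

definition wedge_sum :: "(('i \<Rightarrow> 'a::field) \<times> ('i \<Rightarrow> 'a)) list \<Rightarrow> 'i \<times> 'i \<Rightarrow> 'a" where
  "wedge_sum L = (\<Sum>(x, y)\<leftarrow>L. wedge x y)"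

lemma wedge_sum_Nil [simp]: "wedge_sum [] = 0"
  and wedge_sum_Cons [simp]: "wedge_sum ((x, y) # L) = wedge x y + wedge_sum L"
  and wedge_sum_append [simp]: "wedge_sum (L @ M) = wedge_sum L + wedge_sum M"
  by (simp_all add: wedge_sum_def)

definition skew :: "(('i \<Rightarrow> 'a::field) \<times> ('i \<Rightarrow> 'a)) list \<Rightarrow> (('i \<Rightarrow> 'a) \<times> ('i \<Rightarrow> 'a)) list" where
  "skew L = concat (map (\<lambda>(x, y). [(x, y), (- y, x)]) L)"

lemma skew_Nil [simp]: "skew [] = []"
  and skew_Cons [simp]: "skew ((x, y) # L) = (x, y) # (- y, x) # skew L"
  by (simp_all add: skew_def)

definition der_pairs ::
    "(('i \<Rightarrow> 'a::field) \<Rightarrow> ('i \<Rightarrow> 'a)) \<Rightarrow> (('i \<Rightarrow> 'a) \<times> ('i \<Rightarrow> 'a)) list \<Rightarrow> (('i \<Rightarrow> 'a) \<times> ('i \<Rightarrow> 'a)) list" where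
  "der_pairs g L = map (apfst g) L @ map (apsnd g) L"

lemma wedge_sum_eq_tensor_skew: "wedge_sum L = tensor (skew L)"
  by (induction L) (auto simp: wedge_eq_outer ac_simps)

lemma skew_subset: "vsubspace X \<Longrightarrow> set L \<subseteq> X \<times> X \<Longrightarrow> set (skew L) \<subseteq> X \<times> X"
  by (induction L) (auto simp: vs.subspace_neg)

lemma skew_map_prod:
  "linear_on X g \<Longrightarrow> set L \<subseteq> X \<times> X \<Longrightarrow> map (map_prod g g) (skew L) = skew (map (map_prod g g) L)"
  by (induction L) (auto simp: linear_on_neg)

lemma tensor_map_prod_skew_transpose:
  assumes "linear_on X g" "linear_on X h" "set L \<subseteq> X \<times> X"
  shows "tensor (map (map_prod g h) (skew L)) (i, j) = - tensor (map (map_prod h g) (skew L)) (j, i)"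
  using assms(3)
  by (induction L) (auto simp: tensor_apply linear_on_neg[OF assms(1)] linear_on_neg[OF assms(2)]
      fun_algebra_apply algebra_simps)

lemma wedge_sum_mem_wedge2: "set L \<subseteq> X \<times> X \<Longrightarrow> wedge_sum L \<in> wedge2 X"
  by (induction L) (auto intro!: vs.subspace_add[OF subspace_wedge2] vs.subspace_0[OF subspace_wedge2] wedge_mem_wedge2)

lemma mem_wedge2_iff:
  assumes X: "vsubspace X"
  shows "w \<in> wedge2 X \<longleftrightarrow> (\<exists>L. set L \<subseteq> X \<times> X \<and> w = wedge_sum L)"
proof
  assume "w \<in> wedge2 X"
  then show "\<exists>L. set L \<subseteq> X \<times> X \<and> w = wedge_sum L"
    unfolding wedge2_def
  proof (induction rule: vs.span_induct_alt)
    case base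
    show ?case by (rule exI[of _ "[]"]) simp
  next
    case (step c z y)
    then obtain L a b where "set L \<subseteq> X \<times> X" "y = wedge_sum L" "z = wedge a b" "a \<in> X" "b \<in> X"
      by blast
    then show ?case
      by (intro exI[of _ "(sc c a, b) # L"]) (auto simp: wedge_sc_left vs.subspace_scale[OF X])
  qed
qed (auto intro: wedge_sum_mem_wedge2)

lemma wedge_sum_map_apfst_sc: "wedge_sum (map (apfst (sc c)) L) = sc c (wedge_sum L)"
  by (induction L) (auto simp: wedge_sc_left vs.scale_right_distrib)

lemma wedge_sum_der_pairs_append:
  "wedge_sum (der_pairs g (L @ M)) = wedge_sum (der_pairs g L) + wedge_sum (der_pairs g M)"
  by (simp add: der_pairs_def ac_simps)

lemma wedge_sum_der_pairs_map_apfst_sc: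
  assumes "linear_on X g" "set L \<subseteq> X \<times> X"
  shows "wedge_sum (der_pairs g (map (apfst (sc c)) L)) = sc c (wedge_sum (der_pairs g L))"
  using assms(2)
  by (induction L) (auto simp: der_pairs_def wedge_sc_left linear_on_sc[OF assms(1)]
      vs.scale_right_distrib ac_simps)

lemma wedge_sum_der_pairs_eq_tensor:
  assumes "vsubspace X" "linear_on X g" "set L \<subseteq> X \<times> X"
  shows "wedge_sum (der_pairs g L) = tensor (map (apfst g) (skew L)) + tensor (map (apsnd g) (skew L))"
  using assms(3)
  by (induction L) (auto simp: der_pairs_def wedge_eq_outer linear_on_neg[OF assms(2)] ac_simps)

lemma wedge_sum_der_pairs_eq_0:
  assumes X: "vsubspace X" and g: "linear_on X g" and L: "set L \<subseteq> X \<times> X"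
    and L0: "wedge_sum L = 0"
  shows "wedge_sum (der_pairs g L) = 0"
proof -
  have skew_L: "fst ` set (skew L) \<subseteq> X" "snd ` set (skew L) \<subseteq> X" "tensor (skew L) = 0"
    using skew_subset[OF X L] L0 by (auto simp: wedge_sum_eq_tensor_skew)
  show ?thesis
    using tensor_map_apfst_eq_0[OF X g skew_L(1,3)] tensor_map_apsnd_eq_0[OF X g skew_L(2,3)]
    by (simp add: wedge_sum_der_pairs_eq_tensor[OF X g L])
qed

lemma wedge_sum_der_pairs_cong:
  assumes X: "vsubspace X" and g: "linear_on X g" and L: "set L \<subseteq> X \<times> X" "set M \<subseteq> X \<times> X"
    and LM: "wedge_sum L = wedge_sum M"
  shows "wedge_sum (der_pairs g L) = wedge_sum (der_pairs g M)"
proof -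
  let ?M' = "map (apfst uminus) M"
  have neg: "wedge_sum ?M' = - wedge_sum M" "wedge_sum (der_pairs g ?M') = - wedge_sum (der_pairs g M)"
    using L(2) by (induction M) (auto simp: der_pairs_def wedge_eq_outer outer_def fun_eq_iff
        fun_algebra_apply linear_on_neg[OF g])
  have "wedge_sum (der_pairs g (L @ ?M')) = 0"
    using L LM neg(1) by (intro wedge_sum_der_pairs_eq_0[OF X g]) (auto simp: vs.subspace_neg[OF X])
  then show ?thesis
    by (simp add: wedge_sum_der_pairs_append neg(2))
qed

section \<open>The derivation induced on the exterior square\<close>

lemma derivation_on_wedge_sum:
  assumes X: "vsubspace X" and h: "linear_on (wedge2 X) h"
    and h_wedge: "\<And>x y. x \<in> X \<Longrightarrow> y \<in> X \<Longrightarrow> h (wedge x y) = wedge (g x) y + wedge x (g y)"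
    and L: "set L \<subseteq> X \<times> X"
  shows "h (wedge_sum L) = wedge_sum (der_pairs g L)"
  using L
proof (induction L)
  case Nil
  then show ?case
    using linear_on_0[OF h vs.subspace_0[OF subspace_wedge2]] by (simp add: der_pairs_def)
next
  case (Cons p L)
  obtain a b where p: "p = (a, b)" "a \<in> X" "b \<in> X"
    using Cons.prems by (cases p) auto
  have "h (wedge a b + wedge_sum L) = h (wedge a b) + h (wedge_sum L)"
    using Cons.prems p by (intro linear_on_add[OF h] wedge_mem_wedge2 wedge_sum_mem_wedge2) auto
  then show ?case
    using Cons p h_wedge by (simp add: der_pairs_def ac_simps)
qed

lemma tilde_eqI:
  assumes X: "vsubspace X" and h: "linear_on (wedge2 X) h"
    and h_wedge: "\<And>x y. x \<in> X \<Longrightarrow> y \<in> X \<Longrightarrow> h (wedge x y) = wedge (g x) y + wedge x (g y)"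
    and h_outside: "\<And>w. w \<notin> wedge2 X \<Longrightarrow> h w = 0"
  shows "tilde g X = h"
  unfolding tilde_def
proof (rule the_equality)
  fix h'
  assume h': "linear_on (wedge2 X) h'
    \<and> (\<forall>x\<in>X. \<forall>y\<in>X. h' (wedge x y) = wedge (g x) y + wedge x (g y))
    \<and> (\<forall>w. w \<notin> wedge2 X \<longrightarrow> h' w = 0)"
  show "h' = h"
  proof
    fix w
    show "h' w = h w"
    proof (cases "w \<in> wedge2 X")
      case True
      then obtain L where "set L \<subseteq> X \<times> X" "w = wedge_sum L"
        using mem_wedge2_iff[OF X] by blast
      then show ?thesis
        using h' by (simp add: derivation_on_wedge_sum[OF X] derivation_on_wedge_sum[OF X h h_wedge])
    qed (use h' h_outside in auto)
  qed
qed (use h h_wedge h_outside in auto)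

lemma tilde_wedge_sum:
  assumes X: "vsubspace X" and g: "linear_on X g" and L: "set L \<subseteq> X \<times> X"
  shows "tilde g X (wedge_sum L) = wedge_sum (der_pairs g L)"
proof -
  define rep where "rep w = (SOME L. set L \<subseteq> X \<times> X \<and> w = wedge_sum L)" for w
  define h where "h w = (if w \<in> wedge2 X then wedge_sum (der_pairs g (rep w)) else 0)" for w
  have rep: "set (rep w) \<subseteq> X \<times> X \<and> w = wedge_sum (rep w)" if "w \<in> wedge2 X" for w
    using that mem_wedge2_iff[OF X] unfolding rep_def by (metis (mono_tags, lifting) someI_ex)
  have h_wedge_sum: "h (wedge_sum M) = wedge_sum (der_pairs g M)" if M: "set M \<subseteq> X \<times> X" for M
    using rep[OF wedge_sum_mem_wedge2[OF M]] wedge_sum_mem_wedge2[OF M]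
      wedge_sum_der_pairs_cong[OF X g _ M] by (auto simp: h_def)
  have "linear_on (wedge2 X) h"
    unfolding linear_on_def
  proof (intro conjI ballI allI)
    fix v w
    assume "v \<in> wedge2 X" "w \<in> wedge2 X"
    then obtain L M where "set L \<subseteq> X \<times> X" "v = wedge_sum L" "set M \<subseteq> X \<times> X" "w = wedge_sum M"
      using mem_wedge2_iff[OF X] by metis
    then show "h (v + w) = h v + h w"
      using h_wedge_sum[of "L @ M"] h_wedge_sum by (simp add: wedge_sum_der_pairs_append)
  next
    fix c w
    assume "w \<in> wedge2 X"
    then obtain L where "set L \<subseteq> X \<times> X" "w = wedge_sum L"
      using mem_wedge2_iff[OF X] by metis
    moreover have "set (map (apfst (sc c)) L) \<subseteq> X \<times> X"
      using calculation(1) by (auto simp: vs.subspace_scale[OF X])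
    ultimately show "h (sc c w) = sc c (h w)"
      using h_wedge_sum by (simp add: wedge_sum_map_apfst_sc[symmetric] wedge_sum_der_pairs_map_apfst_sc[OF g])
  qed
  moreover have "h (wedge x y) = wedge (g x) y + wedge x (g y)" if "x \<in> X" "y \<in> X" for x y
    using h_wedge_sum[of "[(x, y)]"] that by (simp add: der_pairs_def)
  moreover have "h w = 0" if "w \<notin> wedge2 X" for w
    using that by (simp add: h_def)
  ultimately have "tilde g X = h"
    by (intro tilde_eqI[OF X]) auto
  then show ?thesis
    using h_wedge_sum[OF L] by simp
qed

lemma tilde_0: "vsubspace X \<Longrightarrow> linear_on X g \<Longrightarrow> tilde g X 0 = 0"
  using tilde_wedge_sum[of X g "[]"] by (simp add: der_pairs_def)

lemma tilde_eq_on_wedge2_subspace: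
  assumes A: "vsubspace A" and B: "vsubspace B" "B \<subseteq> A" and f: "linear_on A f"
    and w: "w \<in> wedge2 B"
  shows "tilde f A w = tilde f B w"
proof -
  obtain L where L: "set L \<subseteq> B \<times> B" "w = wedge_sum L"
    using w mem_wedge2_iff[OF B(1)] by blast
  then have "set L \<subseteq> A \<times> A"
    using B(2) by auto
  then show ?thesis
    using L tilde_wedge_sum[OF A f] tilde_wedge_sum[OF B(1) linear_on_subset[OF f B(2)]] by simp
qed

section \<open>Preimages of the exterior square of A + f(B)\<close>

lemma tensor_contraction_skew_eq_0:
  assumes A: "vsubspace A" and C: "vsubspace C" and U: "vsubspace U" and "A \<subseteq> C" "C \<subseteq> U"
    and f: "linear_on A f" "f ` A \<subseteq> U" and P: "linear_on U P" "\<forall>c\<in>C. P c = 0"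
    and L: "set L \<subseteq> A \<times> A" and M: "set M \<subseteq> C \<times> C"
    and LM: "wedge_sum (der_pairs f L) = wedge_sum M"
  shows "tensor (map (apfst (\<lambda>x. P (f x))) (skew L)) = 0"
proof -
  \<comment> \<open>P kills A and C, so of the vanishing tensor ?K only the part (P \<circ> f) \<otimes> id survives P \<otimes> id.\<close>
  let ?K = "map (apfst f) (skew L) @ map (apsnd f) (skew L) @ map (apfst uminus) (skew M)"
  have skew_L: "set (skew L) \<subseteq> A \<times> A" and skew_M: "set (skew M) \<subseteq> C \<times> C"
    using skew_subset[OF A L] skew_subset[OF C M] .
  have "tensor ?K = 0"
    using LM[unfolded wedge_sum_der_pairs_eq_tensor[OF A f(1) L], unfolded wedge_sum_eq_tensor_skew]
    by (simp add: tensor_map_apfst_uminus add_diff_eq)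
  moreover have "fst ` set ?K \<subseteq> U"
  proof -
    have "a \<in> U \<and> f a \<in> U" if "(a, b) \<in> set (skew L)" for a b
      using skew_L that f(2) \<open>A \<subseteq> C\<close> \<open>C \<subseteq> U\<close> by blast
    moreover have "- c \<in> U" if "(c, d) \<in> set (skew M)" for c d
      using skew_M that \<open>C \<subseteq> U\<close> vs.subspace_neg[OF U] by blast
    ultimately show ?thesis
      by auto
  qed
  ultimately have "tensor (map (apfst P) ?K) = 0"
    by (intro tensor_map_apfst_eq_0[OF U P(1)])
  moreover have "tensor (map (apfst P) (map (apsnd f) (skew L))) = 0"
    using skew_L \<open>A \<subseteq> C\<close> P(2) by (intro tensor_eq_0_if_fst_eq_0) auto
  moreover have "tensor (map (apfst P) (map (apfst uminus) (skew M))) = 0"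
    using skew_M P(2) by (intro tensor_eq_0_if_fst_eq_0) (auto simp: vs.subspace_neg[OF C])
  ultimately show ?thesis
    by (simp add: apfst_compose o_def)
qed

lemma wedge_sum_mem_wedge2_if_contraction_eq_0:
  assumes A: "vsubspace A" and Q: "linear_on A Q" and QB: "\<forall>x\<in>A. x - Q x \<in> B"
    and L: "set L \<subseteq> A \<times> A" and L0: "tensor (map (apfst Q) (skew L)) = 0"
  shows "wedge_sum L \<in> wedge2 B"
proof -
  \<comment> \<open>Split id = R + Q in both factors: Q \<otimes> id kills the tensor by hypothesis, hence so do
    Q \<otimes> Q and Q \<otimes> R, and R \<otimes> Q does by antisymmetry; only R \<otimes> R remains.\<close>
  define R where "R x = x - Q x" for x
  have R: "linear_on A R"
    using Q unfolding R_def linear_on_def by (simp add: vs.scale_right_diff_distrib)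
  have "snd ` set (map (apfst Q) (skew L)) \<subseteq> A"
    using skew_subset[OF A L] by auto
  from tensor_map_apsnd_eq_0[OF A R this L0] tensor_map_apsnd_eq_0[OF A Q this L0]
  have QR: "tensor (map (map_prod Q R) (skew L)) = 0" and QQ: "tensor (map (map_prod Q Q) (skew L)) = 0"
    by (simp_all add: o_def map_prod_def split_def)
  have RQ: "tensor (map (map_prod R Q) (skew L)) = 0"
    using tensor_map_prod_skew_transpose[OF R Q L] QR by (auto simp: fun_eq_iff zero_fun_apply)
  have "wedge_sum L = tensor (map (map_prod (\<lambda>x. R x + Q x) (\<lambda>x. R x + Q x)) (skew L))"
    by (simp add: R_def wedge_sum_eq_tensor_skew)
  also have "\<dots> = tensor (map (map_prod R R) (skew L))"
    using QR QQ RQ by (simp add: tensor_map_prod_add_left tensor_map_prod_add_right)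
  also have "\<dots> = wedge_sum (map (map_prod R R) L)"
    by (simp add: skew_map_prod[OF R L] wedge_sum_eq_tensor_skew)
  also have "\<dots> \<in> wedge2 B"
    using L QB unfolding R_def by (intro wedge_sum_mem_wedge2) fastforce
  finally show ?thesis .
qed

lemma mem_wedge2_if_tilde_mem_wedge2:
  assumes B: "vsubspace B" and C: "vsubspace C" and "A \<subseteq> C" "f ` B \<subseteq> C" and f: "linear_on A f"
    and T: "rel_basis A B T" "inj_on f T" "rel_basis U C (f ` T)"
    and w: "w \<in> wedge2 A" and fw: "tilde f A w \<in> wedge2 C"
  shows "w \<in> wedge2 B"
proof -
  have A: "vsubspace A" and U: "vsubspace U" and "C \<subseteq> U"
    using T by (auto simp: rel_basis_subspace rel_basis_subset)
  obtain P where P: "linear_on U P" "\<forall>c\<in>C. P c = 0" and fA: "f ` A \<subseteq> U"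
    and PB: "\<forall>x\<in>A. x - P (f x) \<in> B"
    using projection_inverting_derivation[OF B C f \<open>f ` B \<subseteq> C\<close> T] by blast
  obtain L where L: "set L \<subseteq> A \<times> A" "w = wedge_sum L"
    using w mem_wedge2_iff[OF A] by blast
  obtain M where M: "set M \<subseteq> C \<times> C" "tilde f A w = wedge_sum M"
    using fw mem_wedge2_iff[OF C] by blast
  have "wedge_sum (der_pairs f L) = wedge_sum M"
    using tilde_wedge_sum[OF A f L(1)] L(2) M(2) by simp
  then have "tensor (map (apfst (\<lambda>x. P (f x))) (skew L)) = 0"
    by (rule tensor_contraction_skew_eq_0[OF A C U \<open>A \<subseteq> C\<close> \<open>C \<subseteq> U\<close> f fA P L(1) M(1)])
  then show ?thesis
    using wedge_sum_mem_wedge2_if_contraction_eq_0[OF A linear_on_comp[OF f P(1) A fA] PB L(1)] L(2)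
    by simp
qed

theorem corollary3p3:
  fixes V :: "('i \<Rightarrow> 'a::{field, finite}) set"
    and NV :: "('i \<times> 'i \<Rightarrow> 'a) set"
    and A B U :: "('i \<Rightarrow> 'a) set"
    and f :: "('i \<Rightarrow> 'a) \<Rightarrow> ('i \<Rightarrow> 'a)"
  assumes V: "vsubspace V"
    and NV: "vsubspace NV" "NV \<subseteq> wedge2 V"
    and B: "vsubspace B" "fin_dim B" "B \<subseteq> A"
    and A: "vsubspace A" "fin_dim A" "A \<subseteq> V"
    and f_lin: "linear_on A f"
    and f_B: "f ` B \<subseteq> V"
    and f_der: "tilde f B ` (NV \<inter> wedge2 B) \<subseteq> NV"
    and U: "vsubspace U" "ssum A (f ` B) \<subseteq> U"
    and T: "\<exists>T. rel_basis A B T \<and> inj_on f T \<and> rel_basis U (ssum A (f ` B)) (f ` T)"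
  shows "NV \<inter> wedge2 (ssum A (f ` B))
           = ssum (NV \<inter> wedge2 (ssum A (f ` B))) (tilde f A ` (NV \<inter> wedge2 A))
             \<inter> wedge2 (ssum A (f ` B))
       \<and> tilde f A ` (NV \<inter> wedge2 A)
           \<subseteq> ssum (NV \<inter> wedge2 (ssum A (f ` B))) (tilde f A ` (NV \<inter> wedge2 A))
       \<and> (\<forall>w\<in>wedge2 B. tilde f A w = tilde f B w)"
proof -
  obtain T where T: "rel_basis A B T" "inj_on f T" "rel_basis U (ssum A (f ` B)) (f ` T)"
    using T by blast
  define C where "C = ssum A (f ` B)"
  have C: "vsubspace C" "A \<subseteq> C" "f ` B \<subseteq> C"
    unfolding C_def using subspace_ssum_image[OF A(1) B(1,3) f_lin] .
  have tilde_agree: "\<forall>w\<in>wedge2 B. tilde f A w = tilde f B w"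
    using tilde_eq_on_wedge2_subspace[OF A(1) B(1,3) f_lin] by blast
  let ?D = "tilde f A ` (NV \<inter> wedge2 A)"
  have "0 \<in> ?D"
    using tilde_0[OF A(1) f_lin] vs.subspace_0[OF NV(1)] vs.subspace_0[OF subspace_wedge2] by force
  moreover have "ssum (NV \<inter> wedge2 C) ?D \<inter> wedge2 C = NV \<inter> wedge2 C"
  proof (rule inter_ssum_eq_inter[OF NV(1) subspace_wedge2 \<open>0 \<in> ?D\<close>])
    fix d
    assume "d \<in> ?D" "d \<in> wedge2 C"
    then obtain m where "m \<in> NV" "m \<in> wedge2 A" "d = tilde f A m" "tilde f A m \<in> wedge2 C"
      by blast
    then show "d \<in> NV"
      using mem_wedge2_if_tilde_mem_wedge2[OF B(1) C f_lin T[folded C_def]] tilde_agree f_der by blast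
  qed
  moreover have "?D \<subseteq> ssum (NV \<inter> wedge2 C) ?D"
    using vs.subspace_0[OF NV(1)] vs.subspace_0[OF subspace_wedge2] by (intro subset_ssum_right) blast
  ultimately show ?thesis
    using tilde_agree unfolding C_def by simp
qed

end
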